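(* Let $f(x)=B_0+B^\top x$ with $B_0\in\mathbb R^m$, $B\in\mathbb R^{n\times m}$, and let $X\sim\mathcal N(\mu,\Sigma)$ with $\Sigma\in\mathbb R^{n\times n}$ symmetric positive definite. For $S\subseteq[n]$ let $A_S=\Sigma_{:,S}\Sigma_{S,S}^{-1}\in\mathbb R^{n\times|S|}$ and let $\widehat A_S\in\mathbb R^{n\times n}$ be obtained by placing the columns of $A_S$ in the positions indexed by $S$ and zeros in the columns outside $S$ (so $\widehat A_\varnothing=0$). For $i\in[n]$ set $$M_i(\Sigma)=\sum_{S\subseteq[n]\setminus\{i\}}\frac{|S|!(n-|S|-1)!}{n!}\big(\widehat A_{S\cup\{i\}}-\widehat A_S\big)\in\mathbb R^{n\times n}.$$ Then for every $x\in\mathbb R^n$ and $i\in[n]$, $\phi_i(f;x)=B^\top M_i(\Sigma)(x-\mu)\in\mathbb R^m$.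
   Context: For $S\subseteq[n]=\{1,\dots,n\}$, $X_S,x_S,\mu_S$ denote subvectors indexed by $S$; $\Sigma_{S,S}$ is the principal submatrix of $\Sigma$ indexed by $S$ and $\Sigma_{:,S}$ the $n\times|S|$ submatrix of columns indexed by $S$. Define $v_f(S)=\mathbb E[f(X)\mid X_S=x_S]-\mathbb E[f(X)]\in\mathbb R^m$ (with $\mathbb E[f(X)\mid X_\varnothing]=\mathbb E[f(X)]$), and the SHAP value $\phi_i(f;x)=\sum_{S\subseteq[n]\setminus\{i\}}\frac{|S|!(n-|S|-1)!}{n!}(v_f(S\cup\{i\})-v_f(S))$. *)

theory Defs
  imports "HOL-Analysis.Analysis"
begin

definition sym_posdef :: "real^'n^'n \<Rightarrow> bool" where
  "sym_posdef \<Sigma> \<longleftrightarrow> transpose \<Sigma> = \<Sigma> \<and> (\<forall>x. x \<noteq> 0 \<longrightarrow> x \<bullet> (\<Sigma> *v x) > 0)"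

definition gauss_density :: "real^'n^'n \<Rightarrow> real^'n \<Rightarrow> real^'n \<Rightarrow> real" where
  "gauss_density \<Sigma> \<mu> z =
     exp (- (1/2) * ((z - \<mu>) \<bullet> (matrix_inv \<Sigma> *v (z - \<mu>))))
     / sqrt ((2 * pi) ^ CARD('n) * det \<Sigma>)"

definition glue :: "'n set \<Rightarrow> real^'n \<Rightarrow> ('n::finite \<Rightarrow> real) \<Rightarrow> real^'n" where
  "glue S x y = (\<chi> j. if j \<in> S then x $ j else y j)"

definition gauss_expect :: "real^'n^'n \<Rightarrow> real^'n \<Rightarrow> (real^'n \<Rightarrow> 'b::euclidean_space) \<Rightarrow> 'b" where
  "gauss_expect \<Sigma> \<mu> g = (\<integral>z. gauss_density \<Sigma> \<mu> z *\<^sub>R g z \<partial>lborel)"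

text \<open>Conditional expectation E[g(X) | X_S = x_S] for X ~ N(mu, Sigma), defined via the
  (everywhere positive, continuous) conditional density of X_{[n]-S} given X_S = x_S;
  for S empty it is E[g(X)].\<close>
definition gauss_cond_expect ::
  "real^'n^'n \<Rightarrow> real^'n \<Rightarrow> (real^'n \<Rightarrow> 'b::euclidean_space) \<Rightarrow> 'n::finite set \<Rightarrow> real^'n \<Rightarrow> 'b" where
  "gauss_cond_expect \<Sigma> \<mu> g S x =
     (if S = {} then gauss_expect \<Sigma> \<mu> g
      else (\<integral>y. gauss_density \<Sigma> \<mu> (glue S x y) *\<^sub>R g (glue S x y) \<partial>(PiM (- S) (\<lambda>_. lborel)))
           /\<^sub>R (\<integral>y. gauss_density \<Sigma> \<mu> (glue S x y) \<partial>(PiM (- S) (\<lambda>_. lborel))))"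

definition shap_v ::
  "real^'n^'n \<Rightarrow> real^'n \<Rightarrow> (real^'n \<Rightarrow> 'b::euclidean_space) \<Rightarrow> real^'n \<Rightarrow> 'n::finite set \<Rightarrow> 'b" where
  "shap_v \<Sigma> \<mu> g x S = gauss_cond_expect \<Sigma> \<mu> g S x - gauss_expect \<Sigma> \<mu> g"

definition shap ::
  "real^'n^'n \<Rightarrow> real^'n \<Rightarrow> (real^'n \<Rightarrow> 'b::euclidean_space) \<Rightarrow> real^'n \<Rightarrow> 'n::finite \<Rightarrow> 'b" where
  "shap \<Sigma> \<mu> g x i =
     (\<Sum>S\<in>{S. S \<subseteq> UNIV - {i}}.
        (fact (card S) * fact (CARD('n) - card S - 1) / fact CARD('n)) *\<^sub>R
        (shap_v \<Sigma> \<mu> g x (S \<union> {i}) - shap_v \<Sigma> \<mu> g x S))"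

text \<open>Inverse of the principal submatrix Sigma_{S,S}, as a function on S x S
  (extended by zero outside S x S).\<close>
definition sub_inv :: "real^'n^'n \<Rightarrow> 'n::finite set \<Rightarrow> 'n \<Rightarrow> 'n \<Rightarrow> real" where
  "sub_inv \<Sigma> S = (THE C.
      (\<forall>j\<in>S. \<forall>l\<in>S. (\<Sum>k\<in>S. \<Sigma> $ j $ k * C k l) = (if j = l then 1 else 0)) \<and>
      (\<forall>j\<in>S. \<forall>l\<in>S. (\<Sum>k\<in>S. C j k * \<Sigma> $ k $ l) = (if j = l then 1 else 0)) \<and>
      (\<forall>j l. j \<notin> S \<or> l \<notin> S \<longrightarrow> C j l = 0))"

definition A_hat :: "real^'n^'n \<Rightarrow> 'n::finite set \<Rightarrow> real^'n^'n" where
  "A_hat \<Sigma> S = (\<chi> r c. if c \<in> S then (\<Sum>k\<in>S. \<Sigma> $ r $ k * sub_inv \<Sigma> S k c) else 0)"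

definition M_mat :: "real^'n^'n \<Rightarrow> 'n::finite \<Rightarrow> real^'n^'n" where
  "M_mat \<Sigma> i =
     (\<Sum>S\<in>{S. S \<subseteq> UNIV - {i}}.
        (fact (card S) * fact (CARD('n) - card S - 1) / fact CARD('n)) *\<^sub>R
        (A_hat \<Sigma> (S \<union> {i}) - A_hat \<Sigma> S))"

end

theory Submission
  imports Defs "HOL-Probability.Distributions"
begin

text \<open>Write \<open>P = \<Sigma>\<^sup>-\<^sup>1\<close> and \<open>m = \<mu> + A_hat \<Sigma> S *v (x - \<mu>)\<close>. For \<open>z\<close> with \<open>z\<^sub>S = x\<^sub>S\<close>,
  \<open>P (m - \<mu>)\<close> is supported on \<open>S\<close> while \<open>z - m\<close> vanishes on \<open>S\<close>, so the Gaussian exponent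
  splits into a constant plus the quadratic form of \<open>P\<close> on the free coordinates, centred at \<open>m\<close>.
  The conditional density is therefore a Gaussian kernel centred at \<open>m\<close>, whose centred first
  moments vanish by reflection symmetry: \<open>E[f(X) | X\<^sub>S = x\<^sub>S] = f(m)\<close> for affine \<open>f\<close>, whence
  \<open>v\<^sub>f(S) = B\<^sup>T A_hat \<Sigma> S (x - \<mu>)\<close>, and the SHAP value is linear in \<open>v\<^sub>f\<close>. The normalising
  integrals are finite, positive, and equal to \<open>1\<close> for \<open>S = {}\<close>: integrating out one coordinate
  at a time replaces the precision matrix by a Schur complement and the determinant by a pivot.\<close>

section \<open>Principal blocks and Schur complements\<close>

text \<open>A principal submatrix indexed by \<open>T\<close> has no type of its own; it is represented by the
  block padded with the identity, which has the same determinant.\<close>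

definition id_extend :: "'n::finite set \<Rightarrow> ('n \<Rightarrow> 'n \<Rightarrow> real) \<Rightarrow> real^'n^'n" where
  "id_extend T P = (\<chi> j l. if j \<in> T \<and> l \<in> T then P j l else if j = l then 1 else 0)"

lemma id_extend_empty: "id_extend {} P = mat 1"
  by (simp add: id_extend_def mat_def vec_eq_iff)

lemma id_extend_UNIV: "id_extend UNIV (\<lambda>j l. A$j$l) = A"
  by (simp add: id_extend_def vec_eq_iff)

lemma det_sparse_column:
  fixes A :: "real^'n::finite^'n"
  assumes "\<And>i. i \<noteq> k \<Longrightarrow> A$i$k = 0"
  shows "det A = A$k$k * det (\<chi> i l. if i = k \<or> l = k then (if i = l then 1 else 0) else A$i$l)"
proof -
  define A' :: "real^'n^'n" where "A' = (\<chi> i l. if i = k \<or> l = k then (if i = l then 1 else 0) else A$i$l)"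
  let ?P = "{p. p permutes (UNIV::'n set)}"
  let ?Q = "{p. p permutes (UNIV::'n set) \<and> p k = k}"
  have zero_off_Q: "(\<Prod>i\<in>UNIV. A$i$p i) = 0" "(\<Prod>i\<in>UNIV. A'$i$p i) = 0" if "p \<in> ?P - ?Q" for p
  proof -
    from that have p: "p permutes UNIV" "p k \<noteq> k" by auto
    obtain i where i: "p i = k" using p(1) by (meson permutes_univ)
    with p(2) have "i \<noteq> k" by auto
    with i have "A$i$p i = 0" using assms by simp
    then show "(\<Prod>i\<in>UNIV. A$i$p i) = 0" by (intro prod_zero) auto
    have "A'$k$p k = 0" using p(2) by (simp add: A'_def)
    then show "(\<Prod>i\<in>UNIV. A'$i$p i) = 0" by (intro prod_zero) auto
  qed
  have on_Q: "(\<Prod>i\<in>UNIV. A$i$p i) = A$k$k * (\<Prod>i\<in>UNIV. A'$i$p i)" if "p \<in> ?Q" for p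
  proof -
    from that have p: "p permutes UNIV" "p k = k" by auto
    have "p i \<noteq> k" if "i \<noteq> k" for i
      using that p by (metis permutes_inj injD)
    then have "(\<Prod>i\<in>UNIV-{k}. A'$i$p i) = (\<Prod>i\<in>UNIV-{k}. A$i$p i)"
      by (intro prod.cong) (auto simp: A'_def)
    then show ?thesis
      using p(2) by (simp add: prod.remove[of UNIV k] A'_def)
  qed
  have "det A = (\<Sum>p\<in>?Q. of_int (sign p) * (\<Prod>i\<in>UNIV. A$i$p i))"
    unfolding det_def using zero_off_Q(1) by (intro sum.mono_neutral_right) (auto simp: finite_permutations)
  also have "\<dots> = A$k$k * (\<Sum>p\<in>?Q. of_int (sign p) * (\<Prod>i\<in>UNIV. A'$i$p i))"
    using on_Q by (simp add: sum_distrib_left mult.left_commute)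
  also have "(\<Sum>p\<in>?Q. of_int (sign p) * (\<Prod>i\<in>UNIV. A'$i$p i)) = det A'"
    unfolding det_def using zero_off_Q(2)
    by (intro sum.mono_neutral_right[symmetric]) (auto simp: finite_permutations)
  finally show ?thesis by (simp add: A'_def)
qed

lemma det_id_plus_column:
  fixes k :: "'n::finite"
  shows "det ((\<chi> i j. if i = j then 1 else if j = k then d i else 0) :: real^'n^'n) = 1"
proof -
  let ?L = "(\<chi> i j. if i = j then 1 else if j = k then d i else 0) :: real^'n^'n"
  have "det ?L = det (transpose ?L)" by simp
  also have "\<dots> = det (\<chi> i l. if i = k \<or> l = k then (if i = l then 1 else 0) else (transpose ?L)$i$l)"
    by (subst det_sparse_column[where k=k]) (auto simp: transpose_def)
  also have "(\<chi> i l. if i = k \<or> l = k then (if i = l then 1 else 0) else (transpose ?L)$i$l) = mat 1"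
    by (auto simp: transpose_def mat_def vec_eq_iff)
  finally show ?thesis by simp
qed

definition schur_compl :: "'a \<Rightarrow> ('a \<Rightarrow> 'a \<Rightarrow> real) \<Rightarrow> 'a \<Rightarrow> 'a \<Rightarrow> real" where
  "schur_compl k P j l = P j l - P j k * P k l / P k k"

lemma det_id_extend_schur:
  fixes T :: "'n::finite set"
  assumes k: "k \<in> T" and nz: "P k k \<noteq> 0"
  shows "det (id_extend T P) = P k k * det (id_extend (T - {k}) (schur_compl k P))"
proof -
  define E where "E = id_extend T P"
  define L :: "real^'n^'n" where "L = (\<chi> i j. if i = j then 1 else if j = k then - (E$i$k / E$k$k) else 0)"
  have E: "E$i$l = (if i \<in> T \<and> l \<in> T then P i l else if i = l then 1 else 0)" for i l
    by (simp add: E_def id_extend_def)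
  have LE: "(L ** E)$i$l = E$i$l - (if i \<noteq> k then E$i$k / E$k$k * E$k$l else 0)" for i l
  proof -
    have "(L ** E)$i$l = (\<Sum>j\<in>UNIV. (if j = i then E$j$l else 0) - (if i \<noteq> k \<and> j = k then E$i$k / E$k$k * E$j$l else 0))"
      by (auto simp: matrix_matrix_mult_def L_def intro!: sum.cong)
    then show ?thesis by (simp add: sum_subtractf)
  qed
  txt \<open>\<open>L\<close> clears column \<open>k\<close> below and above the pivot by row operations.\<close>
  have "det E = det (L ** E)" by (simp add: det_mul L_def det_id_plus_column)
  also have "\<dots> = (L ** E)$k$k * det (\<chi> i l. if i = k \<or> l = k then (if i = l then 1 else 0) else (L ** E)$i$l)"
    by (rule det_sparse_column) (use k nz in \<open>simp add: LE E\<close>)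
  also have "(\<chi> i l. if i = k \<or> l = k then (if i = l then 1 else 0) else (L ** E)$i$l)
      = id_extend (T - {k}) (schur_compl k P)"
    using k by (auto simp: vec_eq_iff LE E id_extend_def schur_compl_def)
  also have "(L ** E)$k$k = P k k" using k by (simp add: LE E)
  finally show ?thesis by (simp add: E_def)
qed

definition quad_form :: "'a set \<Rightarrow> ('a \<Rightarrow> 'a \<Rightarrow> real) \<Rightarrow> ('a \<Rightarrow> real) \<Rightarrow> real" where
  "quad_form T P w = (\<Sum>j\<in>T. \<Sum>l\<in>T. w j * P j l * w l)"

definition symmetric_on :: "'a set \<Rightarrow> ('a \<Rightarrow> 'a \<Rightarrow> real) \<Rightarrow> bool" where
  "symmetric_on T P \<longleftrightarrow> (\<forall>j\<in>T. \<forall>l\<in>T. P j l = P l j)"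

definition posdef_on :: "'a set \<Rightarrow> ('a \<Rightarrow> 'a \<Rightarrow> real) \<Rightarrow> bool" where
  "posdef_on T P \<longleftrightarrow> (\<forall>w. (\<exists>j\<in>T. w j \<noteq> 0) \<longrightarrow> 0 < quad_form T P w)"

lemma quad_form_insert:
  assumes "finite T" "k \<notin> T" "\<And>j. j \<in> T \<Longrightarrow> P j k = P k j"
  shows "quad_form (insert k T) P w = w k * P k k * w k + 2 * w k * (\<Sum>l\<in>T. P k l * w l) + quad_form T P w"
proof -
  have "(\<Sum>j\<in>T. w j * P j k * w k) = w k * (\<Sum>l\<in>T. P k l * w l)"
    using assms(3) by (simp add: sum_distrib_left mult_ac)
  moreover have "(\<Sum>l\<in>T. w k * P k l * w l) = w k * (\<Sum>l\<in>T. P k l * w l)"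
    by (simp add: sum_distrib_left mult.assoc)
  ultimately show ?thesis
    using assms(1,2) by (simp add: quad_form_def sum.distrib)
qed

lemma quad_form_schur_compl:
  assumes "\<And>j. j \<in> T \<Longrightarrow> P j k = P k j"
  shows "quad_form T (schur_compl k P) w = quad_form T P w - (\<Sum>l\<in>T. P k l * w l)^2 / P k k"
proof -
  have "quad_form T (schur_compl k P) w
      = (\<Sum>j\<in>T. \<Sum>l\<in>T. w j * P j l * w l - (w j * P j k) * (P k l * w l) / P k k)"
    unfolding quad_form_def schur_compl_def by (intro sum.cong refl) (simp add: algebra_simps)
  also have "\<dots> = quad_form T P w - (\<Sum>j\<in>T. w j * P j k) * (\<Sum>l\<in>T. P k l * w l) / P k k"
    by (simp add: quad_form_def sum_subtractf sum_divide_distrib[symmetric] sum_product)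
  also have "(\<Sum>j\<in>T. w j * P j k) = (\<Sum>l\<in>T. P k l * w l)"
    using assms by (intro sum.cong refl) (simp add: mult.commute)
  finally show ?thesis by (simp add: power2_eq_square)
qed

lemma symmetric_on_schur_compl:
  assumes "symmetric_on (insert k T) P"
  shows "symmetric_on T (schur_compl k P)"
  unfolding symmetric_on_def schur_compl_def
proof (intro ballI)
  fix j l assume "j \<in> T" "l \<in> T"
  with assms have "P j l = P l j" "P j k = P k j" "P l k = P k l"
    unfolding symmetric_on_def by blast+
  then show "P j l - P j k * P k l / P k k = P l j - P l k * P k j / P k k" by simp
qed

lemma posdef_on_diag:
  assumes "posdef_on T P" "k \<in> T" "finite T"
  shows "0 < P k k"
proof -
  define w :: "'a \<Rightarrow> real" where "w j = (if j = k then 1 else 0)" for j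
  have "quad_form T P w = (\<Sum>j\<in>T. if j = k then (\<Sum>l\<in>T. if l = k then P k k else 0) else 0)"
    unfolding quad_form_def w_def by (intro sum.cong refl) (auto intro!: sum.cong)
  also have "\<dots> = P k k" using assms(2,3) by simp
  finally have "quad_form T P w = P k k" .
  moreover have "\<exists>j\<in>T. w j \<noteq> 0" using assms(2) by (auto simp: w_def)
  ultimately show ?thesis
    using assms(1) unfolding posdef_on_def by metis
qed

text \<open>Extending \<open>w\<close> by \<open>w k = - (\<Sum>l\<in>T. P k l * w l) / P k k\<close> makes the quadratic form of \<open>P\<close>
  equal to that of the Schur complement.\<close>

lemma posdef_on_schur_compl:
  assumes fin: "finite T" and k: "k \<notin> T"
    and sym: "symmetric_on (insert k T) P" and pd: "posdef_on (insert k T) P"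
  shows "posdef_on T (schur_compl k P)"
  unfolding posdef_on_def
proof (intro allI impI)
  fix w :: "'a \<Rightarrow> real" assume w: "\<exists>j\<in>T. w j \<noteq> 0"
  have symk: "\<And>j. j \<in> T \<Longrightarrow> P j k = P k j" using sym unfolding symmetric_on_def by blast
  have a: "P k k > 0" using posdef_on_diag[OF pd] fin by simp
  define r where "r = (\<Sum>l\<in>T. P k l * w l)"
  define s where "s = - r / P k k"
  define w' where "w' = w(k := s)"
  have w'T: "\<And>j. j \<in> T \<Longrightarrow> w' j = w j" using k by (auto simp: w'_def)
  have "\<exists>j\<in>insert k T. w' j \<noteq> 0" using w w'T by auto
  then have "0 < quad_form (insert k T) P w'" using pd by (simp add: posdef_on_def)
  also have "quad_form (insert k T) P w' = s * P k k * s + 2 * s * r + quad_form T P w"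
  proof -
    have "(\<Sum>l\<in>T. P k l * w' l) = r" unfolding r_def using w'T by (intro sum.cong) auto
    moreover have "quad_form T P w' = quad_form T P w" unfolding quad_form_def using w'T by (intro sum.cong) auto
    ultimately show ?thesis by (simp add: quad_form_insert[where P=P, OF fin k symk] w'_def)
  qed
  also have "s * P k k * s + 2 * s * r + quad_form T P w = quad_form T P w - r^2 / P k k"
    using a by (simp add: s_def field_simps power2_eq_square)
  also have "\<dots> = quad_form T (schur_compl k P) w"
    by (simp add: quad_form_schur_compl[where P=P, OF symk] r_def)
  finally show "0 < quad_form T (schur_compl k P) w" .
qed

lemma det_id_extend_pos:
  fixes T :: "'n::finite set"
  assumes "symmetric_on T P" "posdef_on T P"
  shows "0 < det (id_extend T P)"
proof -
  have "finite T" by simp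
  from this assms show ?thesis
  proof (induction T arbitrary: P rule: finite_induct)
    case empty
    then show ?case by (simp add: id_extend_empty)
  next
    case (insert k T)
    have "0 < P k k" using posdef_on_diag[OF insert.prems(2)] insert.hyps by simp
    moreover have "0 < det (id_extend T (schur_compl k P))"
      using insert.IH symmetric_on_schur_compl[OF insert.prems(1)]
        posdef_on_schur_compl[OF insert.hyps insert.prems] by blast
    ultimately show ?case
      using det_id_extend_schur[of k "insert k T" P] insert.hyps by simp
  qed
qed

section \<open>Lebesgue measure on \<open>\<real>\<^sup>n\<close> as a product measure\<close>

lemma vec_lambda_borel_measurable:
  "(vec_lambda :: ('n::finite \<Rightarrow> real) \<Rightarrow> real^'n) \<in> borel_measurable (PiM UNIV (\<lambda>_. lborel))"
proof (subst borel_measurable_euclidean_space, intro ballI)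
  fix b :: "real^'n" assume "b \<in> Basis"
  then obtain i where b: "b = axis i 1" by (auto simp: Basis_vec_def)
  show "(\<lambda>f. vec_lambda f \<bullet> b) \<in> borel_measurable (PiM UNIV (\<lambda>_. lborel))"
    unfolding b cart_eq_inner_axis[symmetric] by simp
qed

lemma lborel_eq_distr_vec_lambda:
  "(lborel :: (real^'n::finite) measure) = distr (PiM UNIV (\<lambda>_. lborel)) borel vec_lambda"
proof (rule lborel_eqI)
  interpret product_sigma_finite "\<lambda>_. lborel :: real measure"
    by (simp add: product_sigma_finite_def sigma_finite_lborel)
  fix l u :: "real^'n" assume le: "\<And>b. b \<in> Basis \<Longrightarrow> l \<bullet> b \<le> u \<bullet> b"
  then have le': "l$i \<le> u$i" for i
    using le[of "axis i 1"] by (auto simp: Basis_vec_def cart_eq_inner_axis)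
  have "vec_lambda -` box l u \<inter> space (PiM UNIV (\<lambda>_. lborel)) = Pi\<^sub>E UNIV (\<lambda>i. {l$i <..< u$i})"
    by (auto simp: space_PiM box_def Basis_vec_def cart_eq_inner_axis[symmetric])
  then have "emeasure (distr (PiM UNIV (\<lambda>_. lborel)) borel vec_lambda) (box l u)
     = emeasure (PiM UNIV (\<lambda>_. lborel)) (Pi\<^sub>E UNIV (\<lambda>i. {l$i <..< u$i}))"
    using vec_lambda_borel_measurable by (subst emeasure_distr) auto
  also have "\<dots> = (\<Prod>i\<in>UNIV. emeasure lborel {l$i <..< u$i})"
    by (subst emeasure_PiM) auto
  also have "\<dots> = ennreal (\<Prod>i\<in>UNIV. u$i - l$i)"
    using le' by (simp add: prod_ennreal)
  also have "(\<Prod>i\<in>UNIV. u$i - l$i) = (\<Prod>b\<in>Basis. (u - l) \<bullet> b)"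
    by (simp add: Basis_vec_def cart_eq_inner_axis axis_eq_axis prod.UNION_disjoint inner_diff_left)
  finally show "emeasure (distr (PiM UNIV (\<lambda>_. lborel)) borel vec_lambda) (box l u)
      = (\<Prod>b\<in>Basis. (u - l) \<bullet> b)" .
qed simp

lemma distr_lborel_reflect: "distr lborel borel (\<lambda>t. c - t) = (lborel :: real measure)"
proof -
  have "lborel = density (distr lborel borel (\<lambda>t. c + (-1) * t)) (\<lambda>_. ennreal \<bar>-1\<bar>)"
    by (rule lborel_real_affine) simp
  then show ?thesis by (simp add: density_1)
qed

lemma distr_PiM_lborel_reflect:
  fixes c :: "'a \<Rightarrow> real"
  assumes T: "finite T"
  shows "distr (PiM T (\<lambda>_. lborel)) (PiM T (\<lambda>_. lborel)) (\<lambda>y. \<lambda>j\<in>T. c j - y j)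
    = PiM T (\<lambda>_. lborel)"
proof -
  interpret product_sigma_finite "\<lambda>_. lborel :: real measure"
    by (simp add: product_sigma_finite_def sigma_finite_lborel)
  show ?thesis
  proof (rule PiM_eqI[OF T])
    fix A assume A: "\<And>i. i \<in> T \<Longrightarrow> A i \<in> sets (lborel :: real measure)"
    have R: "(\<lambda>y. \<lambda>j\<in>T. c j - y j) \<in> measurable (PiM T (\<lambda>_. lborel)) (PiM T (\<lambda>_. lborel))"
      by measurable
    have "(\<lambda>y. \<lambda>j\<in>T. c j - y j) -` Pi\<^sub>E T A \<inter> space (PiM T (\<lambda>_. lborel))
        = Pi\<^sub>E T (\<lambda>i. (\<lambda>t. c i - t) -` A i)"
      by (auto simp: space_PiM PiE_def Pi_def extensional_def)
    then have "emeasure (distr (PiM T (\<lambda>_. lborel)) (PiM T (\<lambda>_. lborel)) (\<lambda>y. \<lambda>j\<in>T. c j - y j)) (Pi\<^sub>E T A)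
        = emeasure (PiM T (\<lambda>_. lborel)) (Pi\<^sub>E T (\<lambda>i. (\<lambda>t. c i - t) -` A i))"
      using A R by (subst emeasure_distr) (auto intro!: sets_PiM_I_finite T)
    also have "\<dots> = (\<Prod>i\<in>T. emeasure lborel ((\<lambda>t. c i - t) -` A i))"
      using A T by (subst emeasure_PiM) (auto intro!: measurable_sets_borel[OF _ A])
    also have "\<dots> = (\<Prod>i\<in>T. emeasure lborel (A i))"
    proof (intro prod.cong refl)
      fix i assume "i \<in> T"
      then have "emeasure (distr lborel borel (\<lambda>t. c i - t)) (A i) = emeasure lborel ((\<lambda>t. c i - t) -` A i)"
        using A by (subst emeasure_distr) auto
      then show "emeasure lborel ((\<lambda>t. c i - t) -` A i) = emeasure lborel (A i)"
        by (simp add: distr_lborel_reflect)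
    qed
    finally show "emeasure (distr (PiM T (\<lambda>_. lborel)) (PiM T (\<lambda>_. lborel)) (\<lambda>y. \<lambda>j\<in>T. c j - y j)) (Pi\<^sub>E T A)
        = (\<Prod>i\<in>T. emeasure lborel (A i))" .
  qed simp
qed

section \<open>Gaussian integrals over \<open>\<real>\<^sup>T\<close>\<close>

lemma nn_integral_gaussian_1d:
  fixes a b c :: real
  assumes a: "a > 0"
  shows "(\<integral>\<^sup>+t. ennreal (exp (-(1/2) * a * (t - c)^2 + b * (t - c))) \<partial>lborel)
         = ennreal (sqrt (2*pi/a) * exp (b^2 / (2*a)))"
proof -
  define \<sigma> where "\<sigma> = 1 / sqrt a"
  have \<sigma>: "\<sigma> > 0" "\<sigma>^2 = 1/a" using a by (simp_all add: \<sigma>_def power_divide)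
  define C where "C = sqrt (2*pi/a) * exp (b^2 / (2*a))"
  have C: "0 \<le> C" using a by (simp add: C_def)
  have "exp (-(1/2) * a * (t - c)^2 + b * (t - c)) = C * normal_density (c + b/a) \<sigma> t" for t
  proof -
    have "exp (-(1/2) * a * (t - c)^2 + b * (t - c))
        = exp (b^2/(2*a)) * exp (-((t - (c+b/a))^2) * a / 2)"
      unfolding exp_add[symmetric] using a by (simp add: field_simps power2_eq_square)
    moreover have "normal_density (c + b/a) \<sigma> t = exp (-((t - (c+b/a))^2) * a / 2) / sqrt (2*pi/a)"
      unfolding normal_density_def \<sigma>(2) using a by (simp add: field_simps)
    ultimately show ?thesis
      using a by (simp add: C_def)
  qed
  then have "(\<integral>\<^sup>+t. ennreal (exp (-(1/2) * a * (t - c)^2 + b * (t - c))) \<partial>lborel)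
      = (\<integral>\<^sup>+t. ennreal C * ennreal (normal_density (c + b/a) \<sigma> t) \<partial>lborel)"
    using C by (intro nn_integral_cong) (simp add: ennreal_mult')
  also have "\<dots> = ennreal C * (\<integral>\<^sup>+t. ennreal (normal_density (c + b/a) \<sigma> t) \<partial>lborel)"
    by (rule nn_integral_cmult) simp
  also have "(\<integral>\<^sup>+t. ennreal (normal_density (c + b/a) \<sigma> t) \<partial>lborel) = 1"
    using \<sigma> by (subst nn_integral_eq_integral) auto
  finally show ?thesis by (simp add: C_def)
qed

definition gauss_kernel ::
  "'a set \<Rightarrow> ('a \<Rightarrow> 'a \<Rightarrow> real) \<Rightarrow> ('a \<Rightarrow> real) \<Rightarrow> ('a \<Rightarrow> real) \<Rightarrow> ('a \<Rightarrow> real) \<Rightarrow> real" where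
  "gauss_kernel T P c h y = exp (-(1/2) * quad_form T P (\<lambda>j. y j - c j) + (\<Sum>j\<in>T. h j * (y j - c j)))"

lemma gauss_kernel_pos: "0 < gauss_kernel T P c h y"
  by (simp add: gauss_kernel_def)

lemma gauss_kernel_measurable [measurable]:
  "gauss_kernel T P c h \<in> borel_measurable (PiM T (\<lambda>_. lborel))"
  unfolding gauss_kernel_def[abs_def] quad_form_def by measurable

lemma gauss_kernel_fun_upd:
  assumes fin: "finite T" and k: "k \<notin> T" and symk: "\<And>j. j \<in> T \<Longrightarrow> P j k = P k j"
  shows "gauss_kernel (insert k T) P c h (x(k:=t))
    = gauss_kernel T P c h x
      * exp (-(1/2) * P k k * (t - c k)^2 + (h k - (\<Sum>l\<in>T. P k l * (x l - c l))) * (t - c k))"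
proof -
  let ?w = "\<lambda>j. (x(k:=t)) j - c j"
  define v where "v = (\<Sum>l\<in>T. P k l * (x l - c l))"
  have "quad_form (insert k T) P ?w
      = ?w k * P k k * ?w k + 2 * ?w k * (\<Sum>l\<in>T. P k l * ?w l) + quad_form T P ?w"
    by (rule quad_form_insert[where P=P, OF fin k symk])
  also have "(\<Sum>l\<in>T. P k l * ?w l) = v"
    using k by (auto simp: v_def intro!: sum.cong)
  also have "quad_form T P ?w = quad_form T P (\<lambda>j. x j - c j)"
    using k unfolding quad_form_def by (auto intro!: sum.cong)
  finally have "quad_form (insert k T) P ?w
      = (t - c k) * P k k * (t - c k) + 2 * (t - c k) * v + quad_form T P (\<lambda>j. x j - c j)"
    by simp
  moreover have "(\<Sum>j\<in>T. h j * ?w j) = (\<Sum>j\<in>T. h j * (x j - c j))"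
    using k by (auto intro!: sum.cong)
  then have "(\<Sum>j\<in>insert k T. h j * ?w j) = h k * (t - c k) + (\<Sum>j\<in>T. h j * (x j - c j))"
    using fin k by simp
  ultimately have "-(1/2) * quad_form (insert k T) P ?w + (\<Sum>j\<in>insert k T. h j * ?w j)
      = (-(1/2) * quad_form T P (\<lambda>j. x j - c j) + (\<Sum>j\<in>T. h j * (x j - c j)))
        + (-(1/2) * P k k * (t - c k)^2 + (h k - v) * (t - c k))"
    by (simp add: algebra_simps power2_eq_square)
  then show ?thesis
    by (simp only: gauss_kernel_def exp_add[symmetric] v_def)
qed

lemma gauss_kernel_schur_compl:
  assumes symk: "\<And>j. j \<in> T \<Longrightarrow> P j k = P k j" and a: "0 < P k k"
  shows "gauss_kernel T P c h x * exp ((h k - (\<Sum>l\<in>T. P k l * (x l - c l)))^2 / (2 * P k k))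
    = exp ((h k)^2 / (2 * P k k)) * gauss_kernel T (schur_compl k P) c (\<lambda>j. h j - h k * P k j / P k k) x"
proof -
  define v where "v = (\<Sum>l\<in>T. P k l * (x l - c l))"
  define q where "q = quad_form T P (\<lambda>j. x j - c j)"
  define r where "r = (\<Sum>j\<in>T. h j * (x j - c j))"
  have "quad_form T (schur_compl k P) (\<lambda>j. x j - c j) = q - v^2 / P k k"
    by (simp add: quad_form_schur_compl[where P=P and T=T and k=k, OF symk] q_def v_def)
  moreover have "(\<Sum>j\<in>T. (h j - h k * P k j / P k k) * u j)
      = (\<Sum>j\<in>T. h j * u j) - h k * (\<Sum>j\<in>T. P k j * u j) / P k k" for u
    by (simp add: algebra_simps sum_subtractf sum_distrib_left sum_divide_distrib)
  then have "(\<Sum>j\<in>T. (h j - h k * P k j / P k k) * (x j - c j)) = r - h k * v / P k k"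
    by (simp add: r_def v_def)
  moreover have "(-(1/2) * q + r) + (h k - v)^2 / (2 * P k k)
      = (h k)^2 / (2 * P k k) + (-(1/2) * (q - v^2 / P k k) + (r - h k * v / P k k))"
    using a by (simp add: field_simps power2_eq_square)
  ultimately show ?thesis
    by (simp only: gauss_kernel_def exp_add[symmetric] q_def r_def v_def)
qed

text \<open>Integrating out \<open>y k\<close> by completing the square.\<close>

lemma nn_integral_gauss_kernel_insert:
  assumes fin: "finite T" and k: "k \<notin> T" and symk: "\<And>j. j \<in> T \<Longrightarrow> P j k = P k j"
    and a: "0 < P k k"
  shows "(\<integral>\<^sup>+y. gauss_kernel (insert k T) P c h y \<partial>PiM (insert k T) (\<lambda>_. lborel))
    = ennreal (sqrt (2*pi / P k k) * exp ((h k)^2 / (2 * P k k)))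
      * (\<integral>\<^sup>+x. gauss_kernel T (schur_compl k P) c (\<lambda>j. h j - h k * P k j / P k k) x \<partial>PiM T (\<lambda>_. lborel))"
proof -
  interpret product_sigma_finite "\<lambda>_. lborel :: real measure"
    by (simp add: product_sigma_finite_def sigma_finite_lborel)
  define K where "K = sqrt (2*pi / P k k) * exp ((h k)^2 / (2 * P k k))"
  define G' where "G' = gauss_kernel T (schur_compl k P) c (\<lambda>j. h j - h k * P k j / P k k)"
  have K: "0 \<le> K" using a by (simp add: K_def)
  have inner: "(\<integral>\<^sup>+t. gauss_kernel (insert k T) P c h (x(k:=t)) \<partial>lborel) = ennreal K * G' x" for x
  proof -
    define v where "v = (\<Sum>l\<in>T. P k l * (x l - c l))"
    have "(\<integral>\<^sup>+t. gauss_kernel (insert k T) P c h (x(k:=t)) \<partial>lborel)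
        = (\<integral>\<^sup>+t. ennreal (gauss_kernel T P c h x)
            * ennreal (exp (-(1/2) * P k k * (t - c k)^2 + (h k - v) * (t - c k))) \<partial>lborel)"
      using less_imp_le[OF gauss_kernel_pos[of T P c h x]]
      by (intro nn_integral_cong) (simp add: gauss_kernel_fun_upd[where P=P, OF fin k symk] v_def ennreal_mult')
    also have "\<dots> = ennreal (gauss_kernel T P c h x)
        * (\<integral>\<^sup>+t. ennreal (exp (-(1/2) * P k k * (t - c k)^2 + (h k - v) * (t - c k))) \<partial>lborel)"
      by (rule nn_integral_cmult) simp
    also have "\<dots> = ennreal (gauss_kernel T P c h x)
        * ennreal (sqrt (2*pi / P k k) * exp ((h k - v)^2 / (2 * P k k)))"
      unfolding nn_integral_gaussian_1d[OF a] ..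
    also have "\<dots> = ennreal (gauss_kernel T P c h x
        * (sqrt (2*pi / P k k) * exp ((h k - v)^2 / (2 * P k k))))"
      by (rule ennreal_mult[symmetric]) (use a in \<open>auto intro: less_imp_le gauss_kernel_pos\<close>)
    also have "\<dots> = ennreal (sqrt (2*pi / P k k)
        * (gauss_kernel T P c h x * exp ((h k - v)^2 / (2 * P k k))))"
      by (simp only: mult_ac)
    also have "gauss_kernel T P c h x * exp ((h k - v)^2 / (2 * P k k)) = exp ((h k)^2 / (2 * P k k)) * G' x"
      unfolding v_def G'_def by (rule gauss_kernel_schur_compl[where P=P and T=T and k=k, OF symk a])
    also have "ennreal (sqrt (2*pi / P k k) * (exp ((h k)^2 / (2 * P k k)) * G' x)) = ennreal (K * G' x)"
      by (simp only: K_def mult.assoc)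
    also have "\<dots> = ennreal K * G' x"
      by (rule ennreal_mult'[OF K])
    finally show ?thesis .
  qed
  have "(\<integral>\<^sup>+y. gauss_kernel (insert k T) P c h y \<partial>PiM (insert k T) (\<lambda>_. lborel))
      = (\<integral>\<^sup>+x. (\<integral>\<^sup>+t. gauss_kernel (insert k T) P c h (x(k:=t)) \<partial>lborel) \<partial>PiM T (\<lambda>_. lborel))"
    by (rule product_nn_integral_insert[OF fin k]) measurable
  also have "\<dots> = ennreal K * (\<integral>\<^sup>+x. G' x \<partial>PiM T (\<lambda>_. lborel))"
    unfolding inner G'_def by (rule nn_integral_cmult) measurable
  finally show ?thesis by (simp only: K_def G'_def)
qed

text \<open>The factor \<open>e\<close> is \<open>exp (h\<^sup>T P\<^sup>-\<^sup>1 h / 2)\<close>; only its finiteness and its value for \<open>h = 0\<close>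
  are needed.\<close>

lemma nn_integral_gauss_kernel:
  fixes T :: "'n::finite set"
  assumes "symmetric_on T P" "posdef_on T P"
  shows "\<exists>e>0. ((\<forall>j\<in>T. h j = 0) \<longrightarrow> e = 1) \<and>
    (\<integral>\<^sup>+y. gauss_kernel T P c h y \<partial>PiM T (\<lambda>_. lborel))
      = ennreal (e * sqrt ((2*pi)^card T / det (id_extend T P)))"
proof -
  have "finite T" by simp
  from this assms show ?thesis
  proof (induction T arbitrary: P h rule: finite_induct)
    case empty
    show ?case
      by (intro exI[of _ 1])
         (simp add: PiM_empty gauss_kernel_def quad_form_def id_extend_empty nn_integral_count_space_finite)
  next
    case (insert k T)
    define a where "a = P k k"
    define h' where "h' = (\<lambda>j. h j - h k * P k j / P k k)"
    have a: "0 < a" unfolding a_def using posdef_on_diag[OF insert.prems(2)] insert.hyps by simp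
    have symk: "\<And>j. j \<in> T \<Longrightarrow> P j k = P k j" using insert.prems(1) unfolding symmetric_on_def by blast
    have sym': "symmetric_on T (schur_compl k P)"
      by (rule symmetric_on_schur_compl[OF insert.prems(1)])
    have pd': "posdef_on T (schur_compl k P)"
      by (rule posdef_on_schur_compl[OF insert.hyps insert.prems])
    obtain e' where e': "e' > 0" "(\<forall>j\<in>T. h' j = 0) \<longrightarrow> e' = 1"
      "(\<integral>\<^sup>+y. gauss_kernel T (schur_compl k P) c h' y \<partial>PiM T (\<lambda>_. lborel))
         = ennreal (e' * sqrt ((2*pi)^card T / det (id_extend T (schur_compl k P))))"
      using insert.IH[OF sym' pd'] by blast
    have det: "det (id_extend (insert k T) P) = a * det (id_extend T (schur_compl k P))"
      using det_id_extend_schur[of k "insert k T" P] a insert.hyps by (simp add: a_def)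
    have det_pos: "0 < det (id_extend T (schur_compl k P))"
      by (rule det_id_extend_pos[OF sym' pd'])
    have sqrt_eq: "sqrt (2*pi/a) * sqrt ((2*pi)^card T / det (id_extend T (schur_compl k P)))
        = sqrt ((2*pi)^card (insert k T) / det (id_extend (insert k T) P))"
      using insert.hyps a det_pos by (simp add: det real_sqrt_mult[symmetric] field_simps)
    have "(\<integral>\<^sup>+y. gauss_kernel (insert k T) P c h y \<partial>PiM (insert k T) (\<lambda>_. lborel))
        = ennreal (sqrt (2*pi/a) * exp ((h k)^2/(2*a)))
          * ennreal (e' * sqrt ((2*pi)^card T / det (id_extend T (schur_compl k P))))"
      using nn_integral_gauss_kernel_insert[where P=P, OF insert.hyps symk a[unfolded a_def]] e'(3)
      by (simp add: a_def h'_def)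
    also have "\<dots> = ennreal (exp ((h k)^2/(2*a)) * e'
        * (sqrt (2*pi/a) * sqrt ((2*pi)^card T / det (id_extend T (schur_compl k P)))))"
      using a e'(1) det_pos by (simp add: ennreal_mult[symmetric] mult_ac)
    finally have "(\<integral>\<^sup>+y. gauss_kernel (insert k T) P c h y \<partial>PiM (insert k T) (\<lambda>_. lborel))
        = ennreal (exp ((h k)^2/(2*a)) * e' * sqrt ((2*pi)^card (insert k T) / det (id_extend (insert k T) P)))"
      by (simp only: sqrt_eq)
    moreover have "exp ((h k)^2/(2*a)) * e' = 1" if "\<forall>j\<in>insert k T. h j = 0"
      using that e'(2) by (simp add: h'_def)
    ultimately show ?case
      using e'(1) by (intro exI[of _ "exp ((h k)^2/(2*a)) * e'"]) simp
  qed
qed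

lemma gauss_kernel_integrable:
  fixes T :: "'n::finite set"
  assumes "symmetric_on T P" "posdef_on T P"
  shows "integrable (PiM T (\<lambda>_. lborel)) (gauss_kernel T P c h)"
proof (rule integrableI_nonneg)
  obtain e where "(\<integral>\<^sup>+y. gauss_kernel T P c h y \<partial>PiM T (\<lambda>_. lborel))
      = ennreal (e * sqrt ((2*pi)^card T / det (id_extend T P)))"
    using nn_integral_gauss_kernel[OF assms] by blast
  then show "(\<integral>\<^sup>+y. gauss_kernel T P c h y \<partial>PiM T (\<lambda>_. lborel)) < \<infinity>" by simp
qed (auto intro: gauss_kernel_pos[THEN less_imp_le])

lemma integral_gauss_kernel:
  fixes T :: "'n::finite set"
  assumes "symmetric_on T P" "posdef_on T P"
  shows "(\<integral>y. gauss_kernel T P c (\<lambda>_. 0) y \<partial>PiM T (\<lambda>_. lborel))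
    = sqrt ((2*pi)^card T / det (id_extend T P))"
proof -
  have nonneg: "0 \<le> (\<integral>y. gauss_kernel T P c (\<lambda>_. 0) y \<partial>PiM T (\<lambda>_. lborel))"
    by (intro integral_nonneg_AE) (auto intro: gauss_kernel_pos[THEN less_imp_le])
  have "ennreal (\<integral>y. gauss_kernel T P c (\<lambda>_. 0) y \<partial>PiM T (\<lambda>_. lborel))
      = (\<integral>\<^sup>+y. gauss_kernel T P c (\<lambda>_. 0) y \<partial>PiM T (\<lambda>_. lborel))"
    using gauss_kernel_integrable[OF assms]
    by (intro nn_integral_eq_integral[symmetric]) (auto intro: gauss_kernel_pos[THEN less_imp_le])
  also have "\<dots> = ennreal (sqrt ((2*pi)^card T / det (id_extend T P)))"
    using nn_integral_gauss_kernel[OF assms, of "\<lambda>_. 0"] by auto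
  finally show ?thesis
    using nonneg det_id_extend_pos[OF assms] by (subst (asm) ennreal_inj) auto
qed

lemma gauss_kernel_moment_integrable:
  fixes T :: "'n::finite set"
  assumes "symmetric_on T P" "posdef_on T P" and j: "j \<in> T"
  shows "integrable (PiM T (\<lambda>_. lborel)) (\<lambda>y. gauss_kernel T P c (\<lambda>_. 0) y * (y j - c j))"
proof -
  txt \<open>\<open>|t| \<le> e\<^sup>t + e\<^sup>-\<^sup>t\<close> bounds the moment by two tilted kernels.\<close>
  let ?G = "\<lambda>s y. gauss_kernel T P c (\<lambda>i. if i = j then s else 0) y"
  have tilt: "?G s y = gauss_kernel T P c (\<lambda>_. 0) y * exp (s * (y j - c j))" for s y
    using j by (simp add: gauss_kernel_def exp_add[symmetric] if_distrib[of "\<lambda>z. z * _"] cong: if_cong)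
  have abs_le: "\<bar>t\<bar> \<le> exp t + exp (-t)" for t :: real
    using exp_ge_add_one_self[of t] exp_ge_add_one_self[of "-t"] exp_gt_zero[of t] exp_gt_zero[of "-t"]
    by linarith
  have bound: "norm (gauss_kernel T P c (\<lambda>_. 0) y * (y j - c j)) \<le> norm (?G 1 y + ?G (-1) y)" for y
    using gauss_kernel_pos[of T P c "\<lambda>_. 0" y] abs_le[of "y j - c j"]
    by (simp add: tilt abs_mult distrib_left[symmetric] mult_left_mono)
  show ?thesis
  proof (rule Bochner_Integration.integrable_bound)
    show "integrable (PiM T (\<lambda>_. lborel)) (\<lambda>y. ?G 1 y + ?G (-1) y)"
      by (intro Bochner_Integration.integrable_add gauss_kernel_integrable[OF assms(1,2)])
    show "(\<lambda>y. gauss_kernel T P c (\<lambda>_. 0) y * (y j - c j)) \<in> borel_measurable (PiM T (\<lambda>_. lborel))"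
      using j by measurable
  qed (use bound in simp)
qed

text \<open>The reflection \<open>y \<mapsto> 2 c - y\<close> preserves the kernel and negates \<open>y j - c j\<close>.\<close>

lemma integral_gauss_kernel_moment:
  assumes T: "finite T" and j: "j \<in> T"
  shows "(\<integral>y. gauss_kernel T P c (\<lambda>_. 0) y * (y j - c j) \<partial>PiM T (\<lambda>_. lborel)) = 0"
proof -
  let ?f = "\<lambda>y. gauss_kernel T P c (\<lambda>_. 0) y * (y j - c j)"
  let ?R = "\<lambda>y. \<lambda>i\<in>T. 2 * c i - y i"
  have "quad_form T P (\<lambda>i. ?R y i - c i) = quad_form T P (\<lambda>i. y i - c i)" for y
    unfolding quad_form_def by (intro sum.cong refl) (simp add: algebra_simps)
  then have f_R: "?f (?R y) = - ?f y" for y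
    using j by (simp add: gauss_kernel_def algebra_simps)
  have "(\<integral>y. ?f y \<partial>PiM T (\<lambda>_. lborel))
      = (\<integral>y. ?f y \<partial>distr (PiM T (\<lambda>_. lborel)) (PiM T (\<lambda>_. lborel)) ?R)"
    using distr_PiM_lborel_reflect[OF T, of "\<lambda>i. 2 * c i"] by simp
  also have "\<dots> = (\<integral>y. ?f (?R y) \<partial>PiM T (\<lambda>_. lborel))"
    using j by (intro integral_distr) measurable
  also have "\<dots> = - (\<integral>y. ?f y \<partial>PiM T (\<lambda>_. lborel))"
    unfolding f_R by simp
  finally show ?thesis by simp
qed

section \<open>Symmetric positive definite matrices\<close>

lemma matrix_mul_matrix_inv:
  fixes A :: "'a::semiring_1^'n^'n"
  assumes "invertible A"
  shows "A ** matrix_inv A = mat 1" "matrix_inv A ** A = mat 1"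
proof -
  have "A ** matrix_inv A = mat 1 \<and> matrix_inv A ** A = mat 1"
    using assms unfolding invertible_def matrix_inv_def by (rule someI_ex)
  then show "A ** matrix_inv A = mat 1" "matrix_inv A ** A = mat 1" by auto
qed

lemma det_matrix_inv:
  fixes A :: "real^'n::finite^'n"
  assumes "invertible A"
  shows "det (matrix_inv A) = 1 / det A"
proof -
  have "det A * det (matrix_inv A) = 1"
    using matrix_mul_matrix_inv[OF assms] by (metis det_I det_mul)
  moreover have "det A \<noteq> 0" using assms invertible_det_nz by blast
  ultimately show ?thesis by (simp add: field_simps)
qed

lemma sum_matrix_vector_mult: "sum N F *v (u::'a::semiring_1^'n::finite) = (\<Sum>s\<in>F. N s *v u)"
  by (induction F rule: infinite_finite_induct) (simp_all add: matrix_vector_mult_add_rdistrib)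

lemma inner_matrix_vector_eq_quad_form:
  "(x::real^'n::finite) \<bullet> (A *v x) = quad_form UNIV (\<lambda>j l. A$j$l) (\<lambda>j. x$j)"
  by (simp add: quad_form_def inner_vec_def matrix_vector_mult_def sum_distrib_left mult.assoc)

lemma symmetric_on_matrix:
  fixes A :: "real^'n::finite^'n"
  assumes "transpose A = A"
  shows "symmetric_on S (\<lambda>j l. A$j$l)"
  unfolding symmetric_on_def by (metis assms transpose_def vec_lambda_beta)

lemma posdef_on_matrix:
  fixes A :: "real^'n::finite^'n"
  assumes pd: "\<And>x. x \<noteq> 0 \<Longrightarrow> 0 < x \<bullet> (A *v x)"
  shows "posdef_on S (\<lambda>j l. A$j$l)"
  unfolding posdef_on_def
proof (intro allI impI)
  fix w :: "'n \<Rightarrow> real" assume w: "\<exists>j\<in>S. w j \<noteq> 0"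
  define x :: "real^'n" where "x = (\<chi> j. if j \<in> S then w j else 0)"
  have "x \<noteq> 0" using w by (auto simp: x_def vec_eq_iff)
  then have "0 < quad_form UNIV (\<lambda>j l. A$j$l) (\<lambda>j. x$j)"
    using pd by (simp add: inner_matrix_vector_eq_quad_form)
  also have "quad_form UNIV (\<lambda>j l. A$j$l) (\<lambda>j. x$j) = (\<Sum>j\<in>S. \<Sum>l\<in>UNIV. x$j * A$j$l * x$l)"
    unfolding quad_form_def by (rule sum.mono_neutral_right) (auto simp: x_def)
  also have "\<dots> = (\<Sum>j\<in>S. \<Sum>l\<in>S. x$j * A$j$l * x$l)"
    by (intro sum.cong refl sum.mono_neutral_right) (auto simp: x_def)
  also have "\<dots> = quad_form S (\<lambda>j l. A$j$l) w"
    unfolding quad_form_def by (simp add: x_def)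
  finally show "0 < quad_form S (\<lambda>j l. A$j$l) w" .
qed

lemma sym_posdef_symmetric_on: "sym_posdef A \<Longrightarrow> symmetric_on S (\<lambda>j l. A$j$l)"
  unfolding sym_posdef_def by (intro symmetric_on_matrix) auto

lemma sym_posdef_posdef_on: "sym_posdef A \<Longrightarrow> posdef_on S (\<lambda>j l. A$j$l)"
  unfolding sym_posdef_def by (intro posdef_on_matrix) auto

lemma sym_posdef_det_id_extend_pos:
  assumes "sym_posdef \<Sigma>"
  shows "0 < det (id_extend S (\<lambda>j l. \<Sigma>$j$l))"
  using assms by (intro det_id_extend_pos sym_posdef_symmetric_on sym_posdef_posdef_on)

lemma sym_posdef_det_pos: "sym_posdef \<Sigma> \<Longrightarrow> 0 < det \<Sigma>"
  using sym_posdef_det_id_extend_pos[of \<Sigma> UNIV] by (simp add: id_extend_UNIV)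

lemma sym_posdef_invertible: "sym_posdef \<Sigma> \<Longrightarrow> invertible \<Sigma>"
  using sym_posdef_det_pos invertible_det_nz by force

lemma sym_posdef_matrix_inv:
  fixes \<Sigma> :: "real^'n::finite^'n"
  assumes sp: "sym_posdef \<Sigma>"
  shows "sym_posdef (matrix_inv \<Sigma>)"
  unfolding sym_posdef_def
proof (intro conjI allI impI)
  let ?P = "matrix_inv \<Sigma>"
  have inv: "\<Sigma> ** ?P = mat 1" "?P ** \<Sigma> = mat 1"
    using matrix_mul_matrix_inv[OF sym_posdef_invertible[OF sp]] by auto
  have \<Sigma>: "transpose \<Sigma> = \<Sigma>" using sp by (simp add: sym_posdef_def)
  have left_inv: "transpose ?P ** \<Sigma> = mat 1"
    using inv \<Sigma> by (metis matrix_transpose_mul transpose_mat)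
  have "transpose ?P = transpose ?P ** (\<Sigma> ** ?P)"
    using inv by simp
  also have "\<dots> = (transpose ?P ** \<Sigma>) ** ?P"
    by (rule matrix_mul_assoc)
  also have "\<dots> = ?P"
    using left_inv by simp
  finally show "transpose ?P = ?P" .
  fix x :: "real^'n" assume "x \<noteq> 0"
  then have "?P *v x \<noteq> 0"
    using inv by (metis matrix_vector_mul_assoc matrix_vector_mul_lid matrix_vector_mult_0_right)
  then have "0 < (?P *v x) \<bullet> (\<Sigma> *v (?P *v x))" using sp by (simp add: sym_posdef_def)
  also have "(?P *v x) \<bullet> (\<Sigma> *v (?P *v x)) = x \<bullet> (?P *v x)"
    using inv by (simp add: matrix_vector_mul_assoc inner_commute)
  finally show "0 < x \<bullet> (?P *v x)" .
qed

definition is_sub_inv :: "real^'n^'n \<Rightarrow> 'n::finite set \<Rightarrow> ('n \<Rightarrow> 'n \<Rightarrow> real) \<Rightarrow> bool" where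
  "is_sub_inv \<Sigma> S C \<longleftrightarrow>
      (\<forall>j\<in>S. \<forall>l\<in>S. (\<Sum>k\<in>S. \<Sigma> $ j $ k * C k l) = (if j = l then 1 else 0)) \<and>
      (\<forall>j\<in>S. \<forall>l\<in>S. (\<Sum>k\<in>S. C j k * \<Sigma> $ k $ l) = (if j = l then 1 else 0)) \<and>
      (\<forall>j l. j \<notin> S \<or> l \<notin> S \<longrightarrow> C j l = 0)"

lemma is_sub_inv_unique:
  assumes C: "is_sub_inv \<Sigma> S C" and D: "is_sub_inv \<Sigma> S D"
  shows "C = D"
proof (intro ext)
  fix j l
  show "C j l = D j l"
  proof (cases "j \<in> S \<and> l \<in> S")
    case False
    then show ?thesis using C D by (auto simp: is_sub_inv_def)
  next
    case True
    then have j: "j \<in> S" and l: "l \<in> S" by auto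
    have "C j l = (\<Sum>k\<in>S. C j k * (\<Sum>m\<in>S. \<Sigma>$k$m * D m l))"
      using D l by (simp add: is_sub_inv_def if_distrib[of "\<lambda>z. _ * z"] cong: if_cong)
    also have "\<dots> = (\<Sum>m\<in>S. (\<Sum>k\<in>S. C j k * \<Sigma>$k$m) * D m l)"
      by (simp add: sum_distrib_left sum_distrib_right mult.assoc) (rule sum.swap)
    also have "\<dots> = D j l"
      using C j by (simp add: is_sub_inv_def if_distrib[of "\<lambda>z. z * _"] cong: if_cong)
    finally show ?thesis .
  qed
qed

text \<open>The inverse of \<open>\<Sigma>\<^sub>S\<^sub>S\<close> is read off from the inverse of \<open>\<Sigma>\<^sub>S\<^sub>S\<close> padded by the identity.\<close>

lemma is_sub_inv_exists:
  assumes "sym_posdef \<Sigma>"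
  shows "\<exists>C. is_sub_inv \<Sigma> S C"
proof -
  define E where "E = id_extend S (\<lambda>j l. \<Sigma>$j$l)"
  have "invertible E"
    using sym_posdef_det_id_extend_pos[OF assms, of S] by (simp add: E_def invertible_det_nz)
  then have inv: "E ** matrix_inv E = mat 1" "matrix_inv E ** E = mat 1"
    by (rule matrix_mul_matrix_inv)+
  define C where "C j l = (if j \<in> S \<and> l \<in> S then matrix_inv E $ j $ l else 0)" for j l
  have E: "E$j$k = (if j \<in> S \<and> k \<in> S then \<Sigma>$j$k else if j = k then 1 else 0)" for j k
    by (simp add: E_def id_extend_def)
  have "(\<Sum>k\<in>S. \<Sigma> $ j $ k * C k l) = (E ** matrix_inv E)$j$l"
    and "(\<Sum>k\<in>S. C j k * \<Sigma> $ k $ l) = (matrix_inv E ** E)$j$l" if "j \<in> S" "l \<in> S" for j l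
    using that unfolding matrix_matrix_mult_def
    by (auto simp: E C_def intro!: sum.mono_neutral_cong_left)
  then have "is_sub_inv \<Sigma> S C"
    using inv by (auto simp: is_sub_inv_def mat_def C_def)
  then show ?thesis by blast
qed

lemma is_sub_inv_sub_inv:
  assumes "sym_posdef \<Sigma>"
  shows "is_sub_inv \<Sigma> S (sub_inv \<Sigma> S)"
proof -
  obtain C where C: "is_sub_inv \<Sigma> S C" using is_sub_inv_exists[OF assms] by blast
  then have "sub_inv \<Sigma> S = C"
    unfolding sub_inv_def is_sub_inv_def[symmetric] using is_sub_inv_unique by blast
  with C show ?thesis by simp
qed

lemma A_hat_empty: "A_hat \<Sigma> {} = 0"
  by (simp add: A_hat_def vec_eq_iff)

lemma A_hat_mult_vector:
  "A_hat \<Sigma> S *v u = \<Sigma> *v (\<chi> k. if k \<in> S then (\<Sum>c\<in>S. sub_inv \<Sigma> S k c * u$c) else 0)"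
proof -
  have "(A_hat \<Sigma> S *v u)$r = (\<Sum>c\<in>S. \<Sum>k\<in>S. \<Sigma>$r$k * sub_inv \<Sigma> S k c * u$c)" for r
    by (simp add: A_hat_def matrix_vector_mult_def sum_distrib_right if_distrib[of "\<lambda>z. z * _"]
        sum.If_cases cong: if_cong)
  also have "\<dots> r = (\<Sum>k\<in>S. \<Sigma>$r$k * (\<Sum>c\<in>S. sub_inv \<Sigma> S k c * u$c))" for r
    by (subst sum.swap) (simp add: sum_distrib_left mult.assoc)
  finally show ?thesis
    by (simp add: vec_eq_iff matrix_vector_mult_def if_distrib[of "\<lambda>z. _ * z"] sum.If_cases cong: if_cong)
qed

section \<open>Conditioning a Gaussian on some coordinates\<close>

definition cond_mean :: "real^'n^'n \<Rightarrow> real^'n \<Rightarrow> 'n::finite set \<Rightarrow> real^'n \<Rightarrow> real^'n" where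
  "cond_mean \<Sigma> \<mu> S x = \<mu> + A_hat \<Sigma> S *v (x - \<mu>)"

lemma cond_mean_empty: "cond_mean \<Sigma> \<mu> {} x = \<mu>"
  by (simp add: cond_mean_def A_hat_empty)

lemma cond_mean_nth:
  assumes "sym_posdef \<Sigma>" "j \<in> S"
  shows "cond_mean \<Sigma> \<mu> S x $ j = x $ j"
proof -
  have "(A_hat \<Sigma> S *v (x - \<mu>))$j
      = (\<Sum>c\<in>UNIV. (if c \<in> S then \<Sum>k\<in>S. \<Sigma>$j$k * sub_inv \<Sigma> S k c else 0) * (x - \<mu>)$c)"
    by (simp add: A_hat_def matrix_vector_mult_def)
  also have "\<dots> = (\<Sum>c\<in>S. (\<Sum>k\<in>S. \<Sigma>$j$k * sub_inv \<Sigma> S k c) * (x - \<mu>)$c)"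
    by (simp add: if_distrib[of "\<lambda>z. z * _"] sum.inter_restrict[symmetric] cong: if_cong)
  also have "\<dots> = (\<Sum>c\<in>S. (if j = c then 1 else 0) * (x - \<mu>)$c)"
    using is_sub_inv_sub_inv[OF assms(1), of S] assms(2)
    by (intro sum.cong refl) (simp add: is_sub_inv_def)
  also have "\<dots> = (x - \<mu>)$j"
    using assms(2) by (simp add: if_distrib[of "\<lambda>z. z * _"] cong: if_cong)
  finally show ?thesis by (simp add: cond_mean_def)
qed

lemma quad_form_glue:
  fixes \<Sigma> :: "real^'n::finite^'n" and \<mu> x :: "real^'n" and S :: "'n set"
  assumes sp: "sym_posdef \<Sigma>"
  defines "P \<equiv> matrix_inv \<Sigma>" and "m \<equiv> cond_mean \<Sigma> \<mu> S x"
  shows "(glue S x y - \<mu>) \<bullet> (P *v (glue S x y - \<mu>))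
    = (m - \<mu>) \<bullet> (P *v (m - \<mu>)) + quad_form (-S) (\<lambda>j l. P$j$l) (\<lambda>j. y j - m$j)"
proof -
  define v where "v = (\<chi> k. if k \<in> S then (\<Sum>c\<in>S. sub_inv \<Sigma> S k c * (x - \<mu>)$c) else 0)"
  define z where "z = glue S x y - m"
  have P: "P ** \<Sigma> = mat 1" "transpose P = P"
    using matrix_mul_matrix_inv[OF sym_posdef_invertible[OF sp]] sym_posdef_matrix_inv[OF sp]
    by (auto simp: P_def sym_posdef_def)
  have Pd: "P *v (m - \<mu>) = v"
    using P(1) by (simp add: m_def cond_mean_def A_hat_mult_vector v_def matrix_vector_mul_assoc)
  have z_S: "z$j = 0" if "j \<in> S" for j
    using that cond_mean_nth[OF sp] by (simp add: z_def m_def glue_def)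
  have vz: "v \<bullet> z = 0"
    unfolding inner_vec_def by (rule sum.neutral) (simp add: v_def z_S)
  have "z \<bullet> (P *v z) = (\<Sum>j\<in>-S. \<Sum>l\<in>UNIV. z$j * P$j$l * z$l)"
    unfolding inner_matrix_vector_eq_quad_form quad_form_def
    by (rule sum.mono_neutral_right) (auto simp: z_S)
  also have "\<dots> = (\<Sum>j\<in>-S. \<Sum>l\<in>-S. z$j * P$j$l * z$l)"
    by (intro sum.cong refl sum.mono_neutral_right) (auto simp: z_S)
  also have "\<dots> = quad_form (-S) (\<lambda>j l. P$j$l) (\<lambda>j. y j - m$j)"
    unfolding quad_form_def by (intro sum.cong refl) (simp add: z_def glue_def)
  finally have zz: "z \<bullet> (P *v z) = quad_form (-S) (\<lambda>j l. P$j$l) (\<lambda>j. y j - m$j)" .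
  have "(m - \<mu>) \<bullet> (P *v z) = (P *v (m - \<mu>)) \<bullet> z"
    by (metis P(2) dot_lmul_matrix transpose_matrix_vector)
  then have cross: "(m - \<mu>) \<bullet> (P *v z) = 0" "z \<bullet> (P *v (m - \<mu>)) = 0"
    using vz by (simp_all add: Pd inner_commute)
  have "glue S x y - \<mu> = (m - \<mu>) + z" by (simp add: z_def)
  then have "(glue S x y - \<mu>) \<bullet> (P *v (glue S x y - \<mu>))
      = (m - \<mu>) \<bullet> (P *v (m - \<mu>)) + (m - \<mu>) \<bullet> (P *v z) + (z \<bullet> (P *v (m - \<mu>)) + z \<bullet> (P *v z))"
    by (simp only: matrix_vector_right_distrib inner_add_left inner_add_right)
  then show ?thesis
    using cross zz by simp
qed

lemma gauss_density_pos:
  assumes "sym_posdef \<Sigma>"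
  shows "0 < gauss_density \<Sigma> \<mu> z"
  using sym_posdef_det_pos[OF assms] by (simp add: gauss_density_def)

lemma gauss_density_glue:
  assumes sp: "sym_posdef \<Sigma>"
  shows "gauss_density \<Sigma> \<mu> (glue S x y)
    = gauss_density \<Sigma> \<mu> (cond_mean \<Sigma> \<mu> S x)
      * gauss_kernel (-S) (\<lambda>j l. matrix_inv \<Sigma> $ j $ l) (\<lambda>j. cond_mean \<Sigma> \<mu> S x $ j) (\<lambda>_. 0) y"
  by (simp add: gauss_density_def gauss_kernel_def quad_form_glue[OF sp] exp_add[symmetric]
      add_divide_distrib)

lemma integral_gauss_density_glue:
  assumes sp: "sym_posdef \<Sigma>"
  shows "(\<integral>y. gauss_density \<Sigma> \<mu> (glue S x y) \<partial>PiM (-S) (\<lambda>_. lborel))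
    = gauss_density \<Sigma> \<mu> (cond_mean \<Sigma> \<mu> S x)
      * sqrt ((2*pi)^card (-S) / det (id_extend (-S) (\<lambda>j l. matrix_inv \<Sigma> $ j $ l)))"
  using sym_posdef_matrix_inv[OF sp]
  by (simp add: gauss_density_glue[OF sp] integral_gauss_kernel sym_posdef_symmetric_on sym_posdef_posdef_on)

lemma integral_gauss_density_glue_pos:
  assumes sp: "sym_posdef \<Sigma>"
  shows "0 < (\<integral>y. gauss_density \<Sigma> \<mu> (glue S x y) \<partial>PiM (-S) (\<lambda>_. lborel))"
  using sym_posdef_matrix_inv[OF sp] gauss_density_pos[OF sp]
  by (simp add: integral_gauss_density_glue[OF sp] sym_posdef_det_id_extend_pos)

lemma integral_gauss_density_glue_empty:
  assumes sp: "sym_posdef \<Sigma>"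
  shows "(\<integral>y. gauss_density \<Sigma> \<mu> (glue {} x y) \<partial>PiM UNIV (\<lambda>_. lborel)) = 1"
  using integral_gauss_density_glue[OF sp, where S="{}"] sym_posdef_det_pos[OF sp]
    det_matrix_inv[OF sym_posdef_invertible[OF sp]]
  by (simp add: cond_mean_empty id_extend_UNIV gauss_density_def real_sqrt_divide real_sqrt_mult)

lemma glue_eq_cond_mean_plus:
  assumes "sym_posdef \<Sigma>"
  shows "glue S x y = cond_mean \<Sigma> \<mu> S x + (\<Sum>j\<in>-S. (y j - cond_mean \<Sigma> \<mu> S x $ j) *\<^sub>R axis j 1)"
proof -
  have "(\<Sum>j\<in>-S. (y j - cond_mean \<Sigma> \<mu> S x $ j) *\<^sub>R axis j (1::real)) $ i
      = (if i \<in> -S then y i - cond_mean \<Sigma> \<mu> S x $ i else 0)" for i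
    by (simp add: axis_def if_distrib[of "\<lambda>z. _ * z"] cong: if_cong)
  then show ?thesis
    using cond_mean_nth[OF assms] by (auto simp: vec_eq_iff glue_def)
qed

text \<open>Expanding the affine function around the conditional mean, only the constant term survives:
  the centred first moments of the kernel vanish.\<close>

lemma integral_gauss_density_glue_affine:
  fixes L :: "real^'n::finite \<Rightarrow> 'b::euclidean_space"
  assumes sp: "sym_posdef \<Sigma>" and L: "linear L"
  shows "(\<integral>y. gauss_density \<Sigma> \<mu> (glue S x y) *\<^sub>R (b + L (glue S x y)) \<partial>PiM (-S) (\<lambda>_. lborel))
    = (\<integral>y. gauss_density \<Sigma> \<mu> (glue S x y) \<partial>PiM (-S) (\<lambda>_. lborel)) *\<^sub>R (b + L (cond_mean \<Sigma> \<mu> S x))"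
proof -
  define m where "m = cond_mean \<Sigma> \<mu> S x"
  define D where "D = gauss_density \<Sigma> \<mu> m"
  define G where "G = gauss_kernel (-S) (\<lambda>j l. matrix_inv \<Sigma> $ j $ l) (\<lambda>j. m $ j) (\<lambda>_. 0)"
  let ?M = "PiM (-S) (\<lambda>_. lborel :: real measure)"
  have sym: "symmetric_on (-S) (\<lambda>j l. matrix_inv \<Sigma> $ j $ l)"
    and pd: "posdef_on (-S) (\<lambda>j l. matrix_inv \<Sigma> $ j $ l)"
    using sym_posdef_matrix_inv[OF sp] by (simp_all add: sym_posdef_symmetric_on sym_posdef_posdef_on)
  have density: "gauss_density \<Sigma> \<mu> (glue S x y) = D * G y" for y
    by (simp add: gauss_density_glue[OF sp] D_def G_def m_def)
  have affine: "b + L (glue S x y) = (b + L m) + (\<Sum>j\<in>-S. (y j - m $ j) *\<^sub>R L (axis j 1))" for y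
    unfolding glue_eq_cond_mean_plus[OF sp, of S x y \<mu>] m_def[symmetric]
    by (simp add: linear_add[OF L] linear_diff[OF L] linear_sum[OF L] linear_scale[OF L] algebra_simps)
  have int_G: "integrable ?M G"
    unfolding G_def by (rule gauss_kernel_integrable[OF sym pd])
  have int_moment: "integrable ?M (\<lambda>y. G y * (y j - m $ j))" if "j \<in> -S" for j
    unfolding G_def by (rule gauss_kernel_moment_integrable[OF sym pd that])
  have moment: "(\<integral>y. G y * (y j - m $ j) \<partial>?M) = 0" if "j \<in> -S" for j
    unfolding G_def by (rule integral_gauss_kernel_moment[OF _ that]) simp
  have "(\<integral>y. (\<Sum>j\<in>-S. (D * (G y * (y j - m $ j))) *\<^sub>R L (axis j 1)) \<partial>?M)
      = (\<Sum>j\<in>-S. (\<integral>y. (D * (G y * (y j - m $ j))) *\<^sub>R L (axis j 1) \<partial>?M))"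
    by (rule Bochner_Integration.integral_sum) (use int_moment in auto)
  also have "\<dots> = 0"
  proof (intro sum.neutral ballI)
    fix j assume j: "j \<in> -S"
    then show "(\<integral>y. (D * (G y * (y j - m $ j))) *\<^sub>R L (axis j 1) \<partial>?M) = 0"
      using moment[OF j] int_moment[OF j] by (subst integral_scaleR_left) auto
  qed
  finally have centred: "(\<integral>y. (\<Sum>j\<in>-S. (D * (G y * (y j - m $ j))) *\<^sub>R L (axis j 1)) \<partial>?M) = 0" .
  have "(\<integral>y. gauss_density \<Sigma> \<mu> (glue S x y) *\<^sub>R (b + L (glue S x y)) \<partial>?M)
      = (\<integral>y. (D * G y) *\<^sub>R (b + L m) + (\<Sum>j\<in>-S. (D * (G y * (y j - m $ j))) *\<^sub>R L (axis j 1)) \<partial>?M)"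
    by (simp add: density affine scaleR_sum_right algebra_simps)
  also have "\<dots> = (\<integral>y. (D * G y) *\<^sub>R (b + L m) \<partial>?M)
      + (\<integral>y. (\<Sum>j\<in>-S. (D * (G y * (y j - m $ j))) *\<^sub>R L (axis j 1)) \<partial>?M)"
    by (rule Bochner_Integration.integral_add) (use int_G int_moment in auto)
  also have "\<dots> = (\<integral>y. D * G y \<partial>?M) *\<^sub>R (b + L m)"
    using int_G by (simp add: centred integral_scaleR_left)
  also have "\<dots> = (\<integral>y. gauss_density \<Sigma> \<mu> (glue S x y) \<partial>?M) *\<^sub>R (b + L m)"
    by (simp add: density)
  finally show ?thesis by (simp add: m_def)
qed

lemma continuous_on_gauss_density:
  assumes "sym_posdef \<Sigma>"
  shows "continuous_on UNIV (gauss_density \<Sigma> \<mu>)"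
proof -
  have "continuous_on UNIV (\<lambda>z. matrix_inv \<Sigma> *v (z - \<mu>))"
    by (intro linear_continuous_on_compose[OF _ matrix_vector_mul_linear] continuous_intros)
  then show ?thesis
    unfolding gauss_density_def[abs_def] using sym_posdef_det_pos[OF assms]
    by (intro continuous_intros) auto
qed

lemma gauss_cond_expect_affine:
  fixes L :: "real^'n::finite \<Rightarrow> 'b::euclidean_space"
  assumes sp: "sym_posdef \<Sigma>" and L: "linear L"
  shows "gauss_cond_expect \<Sigma> \<mu> (\<lambda>z. b + L z) S x = b + L (cond_mean \<Sigma> \<mu> S x)"
proof (cases "S = {}")
  case True
  let ?f = "\<lambda>z. gauss_density \<Sigma> \<mu> z *\<^sub>R (b + L z)"
  have "continuous_on UNIV ?f"
    using continuous_on_gauss_density[OF sp] linear_continuous_on[OF linear_conv_bounded_linear[THEN iffD1, OF L]]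
    by (intro continuous_intros)
  then have "?f \<in> borel_measurable borel"
    by (rule borel_measurable_continuous_onI)
  then have "gauss_expect \<Sigma> \<mu> (\<lambda>z. b + L z) = (\<integral>y. ?f (vec_lambda y) \<partial>PiM UNIV (\<lambda>_. lborel))"
    unfolding gauss_expect_def
    by (subst lborel_eq_distr_vec_lambda) (rule integral_distr[OF vec_lambda_borel_measurable])
  also have "\<dots> = (\<integral>y. gauss_density \<Sigma> \<mu> (glue {} x y) *\<^sub>R (b + L (glue {} x y)) \<partial>PiM (-{}) (\<lambda>_. lborel))"
    by (simp add: glue_def)
  also have "\<dots> = b + L \<mu>"
    using integral_gauss_density_glue_affine[OF sp L, where S="{}" and \<mu>=\<mu> and x=x and b=b]
      integral_gauss_density_glue_empty[OF sp, where \<mu>=\<mu> and x=x]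
    by (simp add: cond_mean_empty)
  finally show ?thesis
    using True by (simp add: gauss_cond_expect_def cond_mean_empty)
next
  case False
  then show ?thesis
    using integral_gauss_density_glue_pos[OF sp, where \<mu>=\<mu> and S=S and x=x]
    by (simp add: gauss_cond_expect_def integral_gauss_density_glue_affine[OF sp L])
qed

theorem mainTheorem10:
  fixes B0 :: "real^'m" and B :: "real^'m^'n" and \<mu> :: "real^'n" and \<Sigma> :: "real^'n^'n"
    and x :: "real^'n" and i :: 'n
  assumes "sym_posdef \<Sigma>"
  shows "shap \<Sigma> \<mu> (\<lambda>z. B0 + transpose B *v z) x i = transpose B *v (M_mat \<Sigma> i *v (x - \<mu>))"
proof -
  let ?f = "\<lambda>z. B0 + transpose B *v z"
  have expect: "gauss_expect \<Sigma> \<mu> ?f = B0 + transpose B *v \<mu>"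
    using gauss_cond_expect_affine[OF assms matrix_vector_mul_linear[of "transpose B"], where b=B0 and S="{}"]
    by (simp add: gauss_cond_expect_def cond_mean_empty)
  have shap_v_eq: "shap_v \<Sigma> \<mu> ?f x S = transpose B *v (A_hat \<Sigma> S *v (x - \<mu>))" for S
    unfolding shap_v_def expect gauss_cond_expect_affine[OF assms matrix_vector_mul_linear] cond_mean_def
    by (simp add: matrix_vector_right_distrib)
  txt \<open>\<open>u\<close> is opaque to the simplifier, which would otherwise split \<open>x - \<mu>\<close> unevenly.\<close>
  define u where "u = x - \<mu>"
  have "transpose B *v (M_mat \<Sigma> i *v u) = (\<Sum>S | S \<subseteq> UNIV - {i}.
      (fact (card S) * fact (CARD('n) - card S - 1) / fact CARD('n)) *\<^sub>R
        (transpose B *v (A_hat \<Sigma> (S \<union> {i}) *v u) - transpose B *v (A_hat \<Sigma> S *v u)))"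
    unfolding M_mat_def sum_matrix_vector_mult linear_sum[OF matrix_vector_mul_linear]
    by (simp add: o_def scaleR_matrix_vector_assoc[symmetric] matrix_vector_mult_diff_rdistrib
        matrix_vector_mult_scaleR matrix_vector_mult_diff_distrib)
  then show ?thesis
    unfolding shap_def shap_v_eq u_def by (rule sym)
qed

end
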